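(* Let $\Pi$ be a projective plane of order $q^2$ and let $\pi$ be a Baer subplane of $\Pi$. Then for any embedding $\phi$ of the complete bipartite graph $K_{q^2,q^2}$ into $\Pi$, the set of image points $\phi(V(K_{q^2,q^2}))$ contains at most (a) $q^2$ points of $\pi$, if $q>2$; (b) $q^2+1$ points of $\pi$, if $q=2$.
   Context: A finite projective plane of order $Q$ has $Q^2+Q+1$ points and lines, $Q+1$ points on each line and $Q+1$ lines through each point; any two distinct points lie on a unique line and any two lines meet in a unique point. A subplane of $\Pi$ is a set of points and lines of $\Pi$ forming a projective plane under the inherited incidence; a Baer subplane of a plane of order $q^2$ is a subplane of order $q$. An embedding of a simple graph $G=(V,E)$ into $\Pi$ is an injective map $\phi$ from $V$ to the points of $\Pi$ such that the induced map sending an edge $ab$ to the line through $\phi(a),\phi(b)$ is injective on $E$. *)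

theory Defs
  imports Main
begin

definition proj_plane :: "'p set \<Rightarrow> 'l set \<Rightarrow> ('p \<Rightarrow> 'l \<Rightarrow> bool) \<Rightarrow> nat \<Rightarrow> bool" where
  "proj_plane P L I Q \<longleftrightarrow>
     finite P \<and> finite L \<and>
     card P = Q^2 + Q + 1 \<and> card L = Q^2 + Q + 1 \<and>
     (\<forall>l\<in>L. card {p\<in>P. I p l} = Q + 1) \<and>
     (\<forall>p\<in>P. card {l\<in>L. I p l} = Q + 1) \<and>
     (\<forall>p\<in>P. \<forall>r\<in>P. p \<noteq> r \<longrightarrow> (\<exists>!l. l \<in> L \<and> I p l \<and> I r l)) \<and>
     (\<forall>l\<in>L. \<forall>m\<in>L. l \<noteq> m \<longrightarrow> (\<exists>!p. p \<in> P \<and> I p l \<and> I p m))"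

text \<open>A subplane: points and lines of the plane forming a projective plane (of some order)
  under the inherited incidence.  A Baer subplane of a plane of order q^2 is one of order q.\<close>
definition baer_subplane ::
  "'p set \<Rightarrow> 'l set \<Rightarrow> ('p \<Rightarrow> 'l \<Rightarrow> bool) \<Rightarrow> nat \<Rightarrow> 'p set \<Rightarrow> 'l set \<Rightarrow> bool" where
  "baer_subplane P L I q P' L' \<longleftrightarrow> P' \<subseteq> P \<and> L' \<subseteq> L \<and> proj_plane P' L' I q"

definition line_through :: "'l set \<Rightarrow> ('p \<Rightarrow> 'l \<Rightarrow> bool) \<Rightarrow> 'p \<Rightarrow> 'p \<Rightarrow> 'l" where
  "line_through L I p r = (THE l. l \<in> L \<and> I p l \<and> I r l)"

definition graph_embedding ::
  "'p set \<Rightarrow> 'l set \<Rightarrow> ('p \<Rightarrow> 'l \<Rightarrow> bool) \<Rightarrow> 'v set \<Rightarrow> 'v set set \<Rightarrow> ('v \<Rightarrow> 'p) \<Rightarrow> bool" where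
  "graph_embedding P L I V E \<phi> \<longleftrightarrow>
     inj_on \<phi> V \<and> \<phi> ` V \<subseteq> P \<and>
     (\<forall>a b c d. {a, b} \<in> E \<longrightarrow> {c, d} \<in> E \<longrightarrow>
        line_through L I (\<phi> a) (\<phi> b) = line_through L I (\<phi> c) (\<phi> d) \<longrightarrow> {a, b} = {c, d})"

definition Kbip_V :: "nat \<Rightarrow> (nat + nat) set" where
  "Kbip_V n = Inl ` {..<n} \<union> Inr ` {..<n}"

definition Kbip_E :: "nat \<Rightarrow> (nat + nat) set set" where
  "Kbip_E n = {{Inl i, Inr j} | i j. i < n \<and> j < n}"

end

theory Submission
  imports Defs
begin

text \<open>Let X and Y be the left and right vertices mapped into the Baer subplane \<pi>. If both are
  nonempty, the lines joining the images of an edge between them are distinct lines of \<pi>: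
  those through a fixed point of X give card Y \<le> q + 1 (and symmetrically card X \<le> q + 1),
  and all of them give card X * card Y \<le> q^2 + q + 1. For q > 2 this yields
  card X + card Y \<le> 2q + 2 \<le> q^2; for q = 2 the product bound rules out card X = card Y = 3.
  If X or Y is empty, the other has at most q^2 elements anyway.\<close>

lemma line_through_eqI:
  assumes "proj_plane P L I Q" and "a \<in> P" "b \<in> P" "a \<noteq> b"
    and "l \<in> L" "I a l" "I b l"
  shows "line_through L I a b = l"
proof -
  have "\<exists>!l. l \<in> L \<and> I a l \<and> I b l"
    using assms(1-4) unfolding proj_plane_def by blast
  then show ?thesis
    unfolding line_through_def using assms(5-7) by (simp add: the1_equality)
qed

lemma baer_subplane_line_through:
  assumes "proj_plane P L I Q" and "baer_subplane P L I q P' L'"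
    and "a \<in> P'" "b \<in> P'" "a \<noteq> b"
  shows "line_through L I a b \<in> L'" "I a (line_through L I a b)" "I b (line_through L I a b)"
proof -
  have sub: "P' \<subseteq> P" "L' \<subseteq> L" and "proj_plane P' L' I q"
    using assms(2) unfolding baer_subplane_def by auto
  then obtain l where l: "l \<in> L'" "I a l" "I b l"
    using assms(3-5) unfolding proj_plane_def by blast
  moreover have "line_through L I a b = l"
    using line_through_eqI[OF assms(1)] assms(3-5) l sub by blast
  ultimately show "line_through L I a b \<in> L'" "I a (line_through L I a b)"
    "I b (line_through L I a b)" by simp_all
qed

lemma card_le_lines_through_subplane_point:
  assumes "baer_subplane P L I q P' L'" and "p \<in> P'"
    and "inj_on g S" and "g ` S \<subseteq> {l \<in> L'. I p l}"
  shows "card S \<le> q + 1"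
proof -
  have "proj_plane P' L' I q"
    using assms(1) unfolding baer_subplane_def by simp
  then have "finite L'" "card {l \<in> L'. I p l} = q + 1"
    using assms(2) unfolding proj_plane_def by auto
  then show ?thesis
    using card_inj_on_le[OF assms(3,4)] by simp
qed

lemma card_Kbip_V_image_Int:
  assumes "inj_on \<phi> (Kbip_V n)"
  shows "card (\<phi> ` Kbip_V n \<inter> S) =
    card {i. i < n \<and> \<phi> (Inl i) \<in> S} + card {j. j < n \<and> \<phi> (Inr j) \<in> S}"
proof -
  let ?X = "{i. i < n \<and> \<phi> (Inl i) \<in> S}" and ?Y = "{j. j < n \<and> \<phi> (Inr j) \<in> S}"
  have "\<phi> ` Kbip_V n \<inter> S = \<phi> ` (Inl ` ?X \<union> Inr ` ?Y)"
    unfolding Kbip_V_def by blast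
  moreover have "Inl ` ?X \<union> Inr ` ?Y \<subseteq> Kbip_V n"
    unfolding Kbip_V_def by blast
  ultimately have "card (\<phi> ` Kbip_V n \<inter> S) = card (Inl ` ?X \<union> Inr ` ?Y)"
    using inj_on_subset[OF assms] by (simp add: card_image)
  also have "\<dots> = card ?X + card ?Y"
    by (subst card_Un_disjoint) (auto simp: card_image)
  finally show ?thesis .
qed

lemma Kbip_edge_lines_inj:
  assumes "graph_embedding P L I (Kbip_V n) (Kbip_E n) \<phi>"
  shows "inj_on (\<lambda>(i, j). line_through L I (\<phi> (Inl i)) (\<phi> (Inr j))) ({..<n} \<times> {..<n})"
proof (rule inj_onI, clarsimp)
  fix i j i' j'
  assume "i < n" "j < n" "i' < n" "j' < n"
    and "line_through L I (\<phi> (Inl i)) (\<phi> (Inr j)) = line_through L I (\<phi> (Inl i')) (\<phi> (Inr j'))"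
  moreover have "{Inl a, Inr b} \<in> Kbip_E n" if "a < n" "b < n" for a b
    using that unfolding Kbip_E_def by blast
  ultimately have "{Inl i, Inr j} = {Inl i', Inr j'}"
    using assms unfolding graph_embedding_def by (elim conjE allE impE) auto
  then show "i = i' \<and> j = j'"
    by (auto simp: doubleton_eq_iff)
qed

lemma add_le_of_bounded_grid:
  fixes x y q :: nat
  assumes "q \<ge> 2" and "x \<le> q\<^sup>2" "y \<le> q\<^sup>2"
    and "x \<noteq> 0 \<Longrightarrow> y \<noteq> 0 \<Longrightarrow> x \<le> q + 1 \<and> y \<le> q + 1 \<and> x * y \<le> q\<^sup>2 + q + 1"
  shows "(q > 2 \<longrightarrow> x + y \<le> q\<^sup>2) \<and> (q = 2 \<longrightarrow> x + y \<le> q\<^sup>2 + 1)"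
proof (cases "x = 0 \<or> y = 0")
  case False
  then have x: "x \<le> q + 1" and y: "y \<le> q + 1" and xy: "x * y \<le> q\<^sup>2 + q + 1"
    using assms(4) by auto
  have "q > 2 \<longrightarrow> 2 * q + 2 \<le> q\<^sup>2"
  proof
    assume "q > 2"
    then have "3 * q \<le> q * q" by (intro mult_le_mono1) simp
    with \<open>q > 2\<close> show "2 * q + 2 \<le> q\<^sup>2" unfolding power2_eq_square by linarith
  qed
  moreover have "q = 2 \<longrightarrow> x + y \<le> 5"
    using x y xy by (cases "x = 3 \<and> y = 3") auto
  ultimately show ?thesis
    using x y by auto
qed (use assms(2,3) in auto)

lemma card_subplane_sides_Kbip_embedding:
  assumes "proj_plane P L I Q" and "baer_subplane P L I q P' L'"
    and "graph_embedding P L I (Kbip_V n) (Kbip_E n) \<phi>"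
    and "X = {i. i < n \<and> \<phi> (Inl i) \<in> P'}" "Y = {j. j < n \<and> \<phi> (Inr j) \<in> P'}"
    and "X \<noteq> {}" "Y \<noteq> {}"
  shows "card X \<le> q + 1 \<and> card Y \<le> q + 1 \<and> card X * card Y \<le> q\<^sup>2 + q + 1"
proof (intro conjI)
  define f where "f = (\<lambda>(i, j). line_through L I (\<phi> (Inl i)) (\<phi> (Inr j)))"
  have inj: "inj_on \<phi> (Kbip_V n)"
    using assms(3) unfolding graph_embedding_def by simp
  have f_inj: "inj_on f (X \<times> Y)"
    unfolding f_def by (rule inj_on_subset[OF Kbip_edge_lines_inj[OF assms(3)]]) (auto simp: assms(4,5))
  have f_line: "f (i, j) \<in> L'" "I (\<phi> (Inl i)) (f (i, j))" "I (\<phi> (Inr j)) (f (i, j))"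
    if "i \<in> X" "j \<in> Y" for i j
  proof -
    have "Inl i \<in> Kbip_V n" "Inr j \<in> Kbip_V n"
      using that unfolding assms(4,5) Kbip_V_def by auto
    then have "\<phi> (Inl i) \<noteq> \<phi> (Inr j)"
      using inj_on_contraD[OF inj] by blast
    moreover have "\<phi> (Inl i) \<in> P'" "\<phi> (Inr j) \<in> P'"
      using that unfolding assms(4,5) by auto
    ultimately show "f (i, j) \<in> L'" "I (\<phi> (Inl i)) (f (i, j))" "I (\<phi> (Inr j)) (f (i, j))"
      unfolding f_def using baer_subplane_line_through[OF assms(1,2)] by simp_all
  qed
  obtain i j where "i \<in> X" "j \<in> Y"
    using assms(6,7) by blast
  have "inj_on (\<lambda>i. f (i, j)) X"
    using inj_on_subset[OF f_inj, of "X \<times> {j}"] \<open>j \<in> Y\<close> unfolding inj_on_def by blast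
  then show "card X \<le> q + 1"
    using \<open>j \<in> Y\<close> f_line unfolding assms(5)
    by (intro card_le_lines_through_subplane_point[OF assms(2), of "\<phi> (Inr j)"]) auto
  have "inj_on (\<lambda>j. f (i, j)) Y"
    using inj_on_subset[OF f_inj, of "{i} \<times> Y"] \<open>i \<in> X\<close> unfolding inj_on_def by blast
  then show "card Y \<le> q + 1"
    using \<open>i \<in> X\<close> f_line unfolding assms(4)
    by (intro card_le_lines_through_subplane_point[OF assms(2), of "\<phi> (Inl i)"]) auto
  have "finite L'" "card L' = q\<^sup>2 + q + 1"
    using assms(2) unfolding baer_subplane_def proj_plane_def by simp_all
  moreover have "f ` (X \<times> Y) \<subseteq> L'"
    using f_line(1) by auto
  ultimately have "card (X \<times> Y) \<le> q\<^sup>2 + q + 1"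
    using card_inj_on_le[OF f_inj] by metis
  then show "card X * card Y \<le> q\<^sup>2 + q + 1"
    by (simp add: card_cartesian_product)
qed

theorem lemma4p9:
  fixes P :: "'p set" and L :: "'l set" and I :: "'p \<Rightarrow> 'l \<Rightarrow> bool"
    and q :: nat and P' :: "'p set" and L' :: "'l set" and \<phi> :: "nat + nat \<Rightarrow> 'p"
  assumes "q \<ge> 2"
    and "proj_plane P L I (q^2)"
    and "baer_subplane P L I q P' L'"
    and "graph_embedding P L I (Kbip_V (q^2)) (Kbip_E (q^2)) \<phi>"
  shows "(q > 2 \<longrightarrow> card (\<phi> ` Kbip_V (q^2) \<inter> P') \<le> q^2)
       \<and> (q = 2 \<longrightarrow> card (\<phi> ` Kbip_V (q^2) \<inter> P') \<le> q^2 + 1)"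
proof -
  define X where "X = {i. i < q\<^sup>2 \<and> \<phi> (Inl i) \<in> P'}"
  define Y where "Y = {j. j < q\<^sup>2 \<and> \<phi> (Inr j) \<in> P'}"
  have "card X \<le> q\<^sup>2" "card Y \<le> q\<^sup>2"
    unfolding X_def Y_def using card_mono[of "{..<q\<^sup>2}"] by (auto simp: subset_iff)
  moreover have "card X \<le> q + 1 \<and> card Y \<le> q + 1 \<and> card X * card Y \<le> q\<^sup>2 + q + 1"
    if "card X \<noteq> 0" "card Y \<noteq> 0"
    using card_subplane_sides_Kbip_embedding[OF assms(2-4) X_def Y_def] that by force
  ultimately have "(q > 2 \<longrightarrow> card X + card Y \<le> q\<^sup>2) \<and> (q = 2 \<longrightarrow> card X + card Y \<le> q\<^sup>2 + 1)"
    using add_le_of_bounded_grid[OF assms(1)] by blast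
  moreover have "card (\<phi> ` Kbip_V (q\<^sup>2) \<inter> P') = card X + card Y"
    unfolding X_def Y_def by (rule card_Kbip_V_image_Int) (use assms(4) in \<open>simp add: graph_embedding_def\<close>)
  ultimately show ?thesis
    by (simp only:)
qed

end
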